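(* Let $\mathbb{K}$ be a field, $A\in\mathbb{K}[x]^{m\times n}$, and $J=\{j_1<\dots<j_k\}\subseteq\{1,\dots,n\}$. Let $\phi_J:\{1,\dots,k\}\to\{1,\dots,n\}$ be given by $\phi_J(i)=j_i$, applied entrywise to tuples, and let $A_{*,J}$ be the submatrix of $A$ formed by the columns with indices in $J$. Then, viewing pivot supports as sets, $\rho(A)\cap J\subseteq\phi_J(\rho(A_{*,J}))$, and equality holds whenever $\rho(A)\subseteq J$.
   Context: For a row vector $p=[p_1,\dots,p_n]$, $\deg(p)=\max_j\deg(p_j)$; the pivot index of a nonzero $p$ is the largest $j$ with $\deg(p_j)=\deg(p)$, and $p_j$ is its pivot entry. A matrix $P\in\mathbb{K}[x]^{k\times n}$ is in Popov form if it has no zero row, the pivot indices of its rows are strictly increasing, its pivot entries are monic, and in each column containing a pivot entry all other entries have degree strictly less than that pivot entry. The Popov form of a matrix $M$ of rank $r$ is the unique matrix in $\mathbb{K}[x]^{r\times n}$ in Popov form whose rows generate the same $\mathbb{K}[x]$-module as the rows of $M$. The pivot support $\rho(M)$ of $M$ is the tuple of pivot indices of the rows of its Popov form (the empty tuple if $M$ has rank $0$). *)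

theory Defs
  imports "Jordan_Normal_Form.DL_Submatrix" "HOL-Computational_Algebra.Polynomial"
begin

text \<open>Indices are 0-based. The zero polynomial is treated as having
  degree minus infinity: only nonzero entries are taken into account.\<close>

definition vdeg :: "'a::zero poly vec \<Rightarrow> nat" where
  "vdeg p = Max {degree (p $ j) | j. j < dim_vec p \<and> p $ j \<noteq> 0}"

definition pivot_index :: "'a::zero poly vec \<Rightarrow> nat" where
  "pivot_index p = Max {j. j < dim_vec p \<and> p $ j \<noteq> 0 \<and> degree (p $ j) = vdeg p}"

definition is_popov :: "'a::field poly mat \<Rightarrow> bool" where
  "is_popov P \<longleftrightarrow>
     (\<forall>i < dim_row P. row P i \<noteq> 0\<^sub>v (dim_col P)) \<and>
     (\<forall>i i'. i < i' \<and> i' < dim_row P \<longrightarrow> pivot_index (row P i) < pivot_index (row P i')) \<and>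
     (\<forall>i < dim_row P. lead_coeff (P $$ (i, pivot_index (row P i))) = 1) \<and>
     (\<forall>i < dim_row P. \<forall>i' < dim_row P. i' \<noteq> i \<longrightarrow>
        P $$ (i', pivot_index (row P i)) = 0 \<or>
        degree (P $$ (i', pivot_index (row P i))) < degree (P $$ (i, pivot_index (row P i))))"

definition row_module :: "'a::comm_ring_1 mat \<Rightarrow> 'a vec set" where
  "row_module M = {vec (dim_col M) (\<lambda>j. \<Sum>i<dim_row M. c i * M $$ (i, j)) | c. True}"

definition popov_form :: "'a::field poly mat \<Rightarrow> 'a poly mat" where
  "popov_form M = (THE P. is_popov P \<and> dim_col P = dim_col M \<and> row_module P = row_module M)"

definition pivot_support :: "'a::field poly mat \<Rightarrow> nat list" where
  "pivot_support M = map (\<lambda>i. pivot_index (row (popov_form M) i)) [0..<dim_row (popov_form M)]"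

end

theory Submission
  imports Defs
begin

text \<open>Encode the monomial \<open>x\<^sup>d e\<^sub>j\<close> of \<open>K[x]\<^sup>n\<close> as the number \<open>d * n + j\<close>; the largest term of
  a row vector then determines both its degree and its pivot index. For this order the rows of a
  Popov form behave like a reduced Groebner basis: their leading terms lie in distinct positions,
  so the leading term of a nonzero combination of rows is a multiple of the leading term of one of
  them. Hence \<open>\<rho>(M)\<close> is the set of pivot indices of the nonzero vectors of the row module of \<open>M\<close>
  (existence and uniqueness of the Popov form come from the usual reduction argument).

  The row module of \<open>A\<^sub>*\<^sub>,\<^sub>J\<close> is the image of that of \<open>A\<close> under deletion of the entries outside
  \<open>J\<close>, and deletion preserves the pivot of every vector whose pivot lies in \<open>J\<close>. This gives
  \<open>\<rho>(A) \<inter> J \<subseteq> \<phi>\<^sub>J(\<rho>(A\<^sub>*\<^sub>,\<^sub>J))\<close>; if \<open>\<rho>(A) \<subseteq> J\<close>, every nonzero vector of the row module of \<open>A\<close>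
  has its pivot in \<open>J\<close>, and the reverse inclusion follows.\<close>

section \<open>Terms and leading terms\<close>

text \<open>The term \<open>t\<close> of a vector of length \<open>n\<close> is the monomial \<open>x\<^bsup>t div n\<^esup> e\<^bsub>t mod n\<^esub>\<close>
  (positions are 0-based); \<open>lead_term v\<close> is junk for the zero vector.\<close>

definition term_coeff :: "'a::zero poly vec \<Rightarrow> nat \<Rightarrow> 'a" where
  "term_coeff v t = coeff (v $ (t mod dim_vec v)) (t div dim_vec v)"

definition lead_term :: "'a::zero poly vec \<Rightarrow> nat" where
  "lead_term v = Max {t. term_coeff v t \<noteq> 0}"

lemma mult_add_le_mult_add_iff:
  fixes n :: nat
  assumes "j < n" "j' < n"
  shows "a * n + j \<le> a' * n + j' \<longleftrightarrow> a < a' \<or> a = a' \<and> j \<le> j'"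
proof
  assume le: "a * n + j \<le> a' * n + j'"
  have "a \<le> a'"
  proof (rule ccontr)
    assume "\<not> a \<le> a'"
    then have "(a' + 1) * n \<le> a * n" by (intro mult_le_mono1) auto
    then show False using le assms by (simp add: algebra_simps)
  qed
  then show "a < a' \<or> a = a' \<and> j \<le> j'" using le by auto
next
  assume "a < a' \<or> a = a' \<and> j \<le> j'"
  then show "a * n + j \<le> a' * n + j'"
  proof
    assume "a < a'"
    then have "(a + 1) * n \<le> a' * n" by (intro mult_le_mono1) auto
    then show ?thesis using assms by (simp add: algebra_simps)
  qed auto
qed

lemma mult_add_div_mod:
  fixes n :: nat
  assumes "j < n"
  shows "(a * n + j) div n = a" "(a * n + j) mod n = j"
  using assms by simp_all

lemma mod_eq_le_shift:
  fixes n :: nat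
  assumes "s mod n = t mod n" "s \<le> t"
  shows "(t div n - s div n) * n + s = t"
proof -
  have "s div n * n \<le> t div n * n" using assms(2) by (intro mult_le_mono1 div_le_mono)
  moreover have "(t div n - s div n) * n = t div n * n - s div n * n" by (rule diff_mult_distrib)
  ultimately show ?thesis using assms(1) div_mult_mod_eq[of s n] div_mult_mod_eq[of t n] by linarith
qed

lemma vec_nonzero_dim_pos: "v \<noteq> 0\<^sub>v (dim_vec v) \<Longrightarrow> dim_vec v > 0"
  by (metis eq_vecI gr0I index_zero_vec(2) less_nat_zero_code)

lemma term_coeff_encode: "j < dim_vec v \<Longrightarrow> term_coeff v (a * dim_vec v + j) = coeff (v $ j) a"
  unfolding term_coeff_def by (simp add: mult_add_div_mod)

lemma finite_term_support:
  assumes "dim_vec v > 0"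
  shows "finite {t. term_coeff v t \<noteq> 0}"
proof (rule finite_subset)
  let ?n = "dim_vec v" and ?D = "\<Sum>j<dim_vec v. degree (v $ j)"
  show "{t. term_coeff v t \<noteq> 0} \<subseteq> {..< Suc ?D * ?n}"
  proof
    fix t assume "t \<in> {t. term_coeff v t \<noteq> 0}"
    then have "coeff (v $ (t mod ?n)) (t div ?n) \<noteq> 0" unfolding term_coeff_def by simp
    then have "t div ?n \<le> degree (v $ (t mod ?n))" by (rule le_degree)
    also have "\<dots> \<le> ?D" by (rule member_le_sum) (use assms in auto)
    finally have "Suc (t div ?n) * ?n \<le> Suc ?D * ?n" by (intro mult_le_mono1) simp
    moreover have "t < Suc (t div ?n) * ?n"
      unfolding mult_Suc using mod_less_divisor[OF assms, of t] div_mult_mod_eq[of t ?n] by linarith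
    ultimately show "t \<in> {..< Suc ?D * ?n}" by (meson lessThan_iff less_le_trans)
  qed
qed simp

lemma vec_nonzero_if_term_coeff:
  assumes "term_coeff v t \<noteq> 0" "dim_vec v > 0"
  shows "v \<noteq> 0\<^sub>v (dim_vec v)"
proof
  assume "v = 0\<^sub>v (dim_vec v)"
  then have "v $ (t mod dim_vec v) = 0" using assms(2) by (metis index_zero_vec(1) mod_less_divisor)
  then show False using assms(1) unfolding term_coeff_def by simp
qed

lemma term_coeff_lead_term:
  assumes v: "v \<noteq> 0\<^sub>v (dim_vec v)"
  shows "term_coeff v (lead_term v) \<noteq> 0"
proof -
  obtain j where j: "j < dim_vec v" "v $ j \<noteq> 0" using v by (metis eq_vecI index_zero_vec)
  then have "term_coeff v (degree (v $ j) * dim_vec v + j) \<noteq> 0" by (simp add: term_coeff_encode)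
  then have "{t. term_coeff v t \<noteq> 0} \<noteq> {}" by blast
  with finite_term_support[OF vec_nonzero_dim_pos[OF v]] show ?thesis
    unfolding lead_term_def using Max_in by fastforce
qed

lemma le_lead_term: "term_coeff v t \<noteq> 0 \<Longrightarrow> dim_vec v > 0 \<Longrightarrow> t \<le> lead_term v"
  unfolding lead_term_def by (rule Max_ge) (use finite_term_support in auto)

lemma term_coeff_gt_lead_term: "lead_term v < t \<Longrightarrow> dim_vec v > 0 \<Longrightarrow> term_coeff v t = 0"
  using le_lead_term[of v t] by auto

lemma lead_term_eqI:
  assumes "term_coeff v t \<noteq> 0" "dim_vec v > 0" "\<And>t'. t < t' \<Longrightarrow> term_coeff v t' = 0"
  shows "lead_term v = t"
  using le_lead_term[OF assms(1,2)] term_coeff_lead_term[OF vec_nonzero_if_term_coeff[OF assms(1,2)]]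
    assms(3) le_neq_implies_less by blast

lemma entry_term_le_lead_term:
  assumes "j < dim_vec v" "v $ j \<noteq> 0"
  shows "degree (v $ j) * dim_vec v + j \<le> lead_term v"
  using assms by (intro le_lead_term) (auto simp: term_coeff_encode)

lemma lead_term_pivot_entry:
  assumes v: "v \<noteq> 0\<^sub>v (dim_vec v)"
  defines "n \<equiv> dim_vec v"
  shows "lead_term v mod n < n" "v $ (lead_term v mod n) \<noteq> 0"
    "degree (v $ (lead_term v mod n)) = lead_term v div n"
    "lead_coeff (v $ (lead_term v mod n)) = term_coeff v (lead_term v)"
    "pivot_index v = lead_term v mod n"
proof -
  have n: "n > 0" using vec_nonzero_dim_pos[OF v] n_def by simp
  let ?j = "lead_term v mod n" and ?a = "lead_term v div n"
  have decomp: "lead_term v = ?a * n + ?j" by simp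
  have below: "degree (v $ j) * n + j \<le> ?a * n + ?j" if "j < n" "v $ j \<noteq> 0" for j
    using entry_term_le_lead_term[of j v] that decomp n_def by simp
  show j: "?j < n" using n by simp
  have c: "coeff (v $ ?j) ?a \<noteq> 0"
    using term_coeff_lead_term[OF v] unfolding term_coeff_def n_def by simp
  then show nz: "v $ ?j \<noteq> 0" by auto
  have "degree (v $ ?j) \<le> ?a"
    using below[OF j nz, unfolded mult_add_le_mult_add_iff[OF j j]] by auto
  with le_degree[OF c] show deg: "degree (v $ ?j) = ?a" by simp
  then show "lead_coeff (v $ ?j) = term_coeff v (lead_term v)"
    unfolding term_coeff_def n_def by simp
  have deg_le: "degree (v $ j) \<le> ?a" if "j < n" "v $ j \<noteq> 0" for j
    using below[OF that, unfolded mult_add_le_mult_add_iff[OF that(1) j]] by auto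
  have vdeg: "vdeg v = ?a"
    unfolding vdeg_def n_def[symmetric]
  proof (rule Max_eqI)
    show "?a \<in> {degree (v $ j) |j. j < n \<and> v $ j \<noteq> 0}" using nz j deg by force
  qed (use deg_le in auto)
  show "pivot_index v = ?j"
    unfolding pivot_index_def n_def[symmetric] vdeg
  proof (rule Max_eqI)
    fix y assume "y \<in> {j. j < n \<and> v $ j \<noteq> 0 \<and> degree (v $ j) = ?a}"
    then have y: "y < n" "v $ y \<noteq> 0" "degree (v $ y) = ?a" by auto
    from below[OF y(1,2)] have "?a * n + y \<le> ?a * n + ?j" unfolding y(3) .
    then show "y \<le> ?j" by (rule add_le_imp_le_left)
  qed (use nz j deg in auto)
qed

lemma lead_term_smult:
  fixes c :: "'a::field poly"
  assumes c: "c \<noteq> 0" and v: "v \<noteq> 0\<^sub>v (dim_vec v)"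
  shows "lead_term (c \<cdot>\<^sub>v v) = degree c * dim_vec v + lead_term v"
    "term_coeff (c \<cdot>\<^sub>v v) (lead_term (c \<cdot>\<^sub>v v)) = lead_coeff c * term_coeff v (lead_term v)"
proof -
  let ?n = "dim_vec v" and ?t = "degree c * dim_vec v + lead_term v"
  have n: "?n > 0" using vec_nonzero_dim_pos[OF v] .
  note L = lead_term_pivot_entry[OF v]
  have coeff_cv: "term_coeff (c \<cdot>\<^sub>v v) t = coeff (c * v $ (t mod ?n)) (t div ?n)" for t
    using n unfolding term_coeff_def by simp
  have t: "?t = (degree c + lead_term v div ?n) * ?n + lead_term v mod ?n"
    using div_mult_mod_eq[of "lead_term v" ?n] by (simp add: algebra_simps)
  have "term_coeff (c \<cdot>\<^sub>v v) ?t = coeff (c * v $ (lead_term v mod ?n)) (degree c + lead_term v div ?n)"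
    unfolding t using L n term_coeff_encode[of "lead_term v mod ?n" "c \<cdot>\<^sub>v v"] by simp
  also have "\<dots> = lead_coeff c * term_coeff v (lead_term v)"
    using L(3,4) coeff_mult_degree_sum[of c "v $ (lead_term v mod ?n)"] by simp
  finally have top: "term_coeff (c \<cdot>\<^sub>v v) ?t = lead_coeff c * term_coeff v (lead_term v)" .
  have above: "term_coeff (c \<cdot>\<^sub>v v) t = 0" if "?t < t" for t
  proof (cases "v $ (t mod ?n) = 0")
    case False
    have "degree (v $ (t mod ?n)) * ?n + t mod ?n \<le> lead_term v"
      using entry_term_le_lead_term[OF mod_less_divisor[OF n] False] .
    then have "(degree c + degree (v $ (t mod ?n))) * ?n < t div ?n * ?n"
      using that add_mult_distrib[of "degree c" "degree (v $ (t mod ?n))" ?n] div_mult_mod_eq[of t ?n] by linarith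
    then have "degree c + degree (v $ (t mod ?n)) < t div ?n"
      using mult_less_cancel2 by blast
    then have "degree (c * v $ (t mod ?n)) < t div ?n"
      using degree_mult_le[of c "v $ (t mod ?n)"] by linarith
    then show ?thesis unfolding coeff_cv by (simp add: coeff_eq_0)
  qed (simp add: coeff_cv)
  have "lead_term (c \<cdot>\<^sub>v v) = ?t"
    by (rule lead_term_eqI) (use top c term_coeff_lead_term[OF v] n above in auto)
  with top show "lead_term (c \<cdot>\<^sub>v v) = ?t"
    "term_coeff (c \<cdot>\<^sub>v v) (lead_term (c \<cdot>\<^sub>v v)) = lead_coeff c * term_coeff v (lead_term v)"
    by auto
qed

lemma term_coeff_diff:
  "dim_vec u = dim_vec w \<Longrightarrow> dim_vec w > 0 \<Longrightarrow> term_coeff (u - w) t = term_coeff u t - term_coeff w t"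
  unfolding term_coeff_def by simp

lemma reduce_term:
  fixes p q :: "'a::field poly vec"
  assumes dims: "dim_vec p = dim_vec q" and q: "q \<noteq> 0\<^sub>v (dim_vec q)"
    and monic: "term_coeff q (lead_term q) = 1"
    and pos: "lead_term q mod dim_vec q = t mod dim_vec q" and le: "lead_term q \<le> t"
  defines "s \<equiv> monom (term_coeff p t) (t div dim_vec q - lead_term q div dim_vec q) \<cdot>\<^sub>v q"
  shows "term_coeff (p - s) t = 0" "\<And>t'. t < t' \<Longrightarrow> term_coeff (p - s) t' = term_coeff p t'"
proof -
  let ?n = "dim_vec q" and ?c = "monom (term_coeff p t) (t div dim_vec q - lead_term q div dim_vec q)"
  have n: "?n > 0" using vec_nonzero_dim_pos[OF q] .
  have dim_s: "dim_vec s = ?n" unfolding s_def by simp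
  have diff: "term_coeff (p - s) t' = term_coeff p t' - term_coeff s t'" for t'
    using term_coeff_diff[of p s t'] dims dim_s n by simp
  have "term_coeff s t = term_coeff p t \<and> (\<forall>t'>t. term_coeff s t' = 0)"
  proof (cases "term_coeff p t = 0")
    case True
    then have "s = 0 \<cdot>\<^sub>v q" unfolding s_def by simp
    then show ?thesis using True n by (simp add: term_coeff_def)
  next
    case False
    then have c: "?c \<noteq> 0" by simp
    have deg: "degree ?c = t div ?n - lead_term q div ?n" using False by (simp add: degree_monom_eq)
    have lead: "lead_term s = t"
      using lead_term_smult(1)[OF c q] mod_eq_le_shift[OF pos le] unfolding s_def deg by simp
    have "term_coeff s (lead_term s) = term_coeff p t"
      using lead_term_smult(2)[OF c q] monic deg unfolding s_def by simp
    then show ?thesis using lead term_coeff_gt_lead_term[of s] dim_s n by auto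
  qed
  then show "term_coeff (p - s) t = 0" "\<And>t'. t < t' \<Longrightarrow> term_coeff (p - s) t' = term_coeff p t'"
    using diff by auto
qed

definition vec_comb :: "nat \<Rightarrow> nat \<Rightarrow> (nat \<Rightarrow> 'a::comm_semiring_0) \<Rightarrow> (nat \<Rightarrow> 'a vec) \<Rightarrow> 'a vec" where
  "vec_comb n k c b = vec n (\<lambda>j. \<Sum>i<k. c i * b i $ j)"

lemma dim_vec_comb [simp]: "dim_vec (vec_comb n k c b) = n"
  unfolding vec_comb_def by simp

lemma term_coeff_vec_comb:
  assumes "n > 0" "\<forall>i<k. dim_vec (b i) = n"
  shows "term_coeff (vec_comb n k c b) t = (\<Sum>i<k. term_coeff (c i \<cdot>\<^sub>v b i) t)"
  using assms unfolding term_coeff_def vec_comb_def by (simp add: coeff_sum)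

lemma lead_term_vec_comb_dominant:
  fixes b :: "nat \<Rightarrow> 'a::field poly vec"
  assumes n: "n > 0" and dims: "\<forall>i<k. dim_vec (b i) = n" and j: "j < k"
    and lead: "lead_term (c j \<cdot>\<^sub>v b j) = L" "term_coeff (c j \<cdot>\<^sub>v b j) L \<noteq> 0"
    and others: "\<And>i t. i < k \<Longrightarrow> i \<noteq> j \<Longrightarrow> L \<le> t \<Longrightarrow> term_coeff (c i \<cdot>\<^sub>v b i) t = 0"
  shows "lead_term (vec_comb n k c b) = L"
proof -
  have split: "term_coeff (vec_comb n k c b) t = term_coeff (c j \<cdot>\<^sub>v b j) t" if "L \<le> t" for t
  proof -
    have "(\<Sum>i\<in>{..<k} - {j}. term_coeff (c i \<cdot>\<^sub>v b i) t) = 0"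
      by (rule sum.neutral) (use others that in auto)
    moreover have "j \<in> {..<k}" using j by simp
    ultimately show ?thesis
      unfolding term_coeff_vec_comb[OF n dims] sum.remove[OF finite_lessThan \<open>j \<in> {..<k}\<close>] by simp
  qed
  show ?thesis
  proof (rule lead_term_eqI)
    show "term_coeff (vec_comb n k c b) L \<noteq> 0" using split lead(2) by simp
    fix t assume "L < t"
    then show "term_coeff (vec_comb n k c b) t = 0"
      using split term_coeff_gt_lead_term[of "c j \<cdot>\<^sub>v b j" t] lead(1) dims j n by simp
  qed (simp add: n)
qed

text \<open>The predictable leading term property: if the leading terms of the \<open>b i\<close> lie in
  pairwise distinct positions, the leading terms of the nonzero summands are pairwise distinct
  too, so the largest of them cannot cancel.\<close>

lemma lead_term_vec_comb:
  fixes b :: "nat \<Rightarrow> 'a::field poly vec"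
  assumes n: "n > 0" and dims: "\<forall>i<k. dim_vec (b i) = n" and nz: "\<forall>i<k. b i \<noteq> 0\<^sub>v n"
    and distinct: "\<forall>i<k. \<forall>i'<k. i \<noteq> i' \<longrightarrow> lead_term (b i) mod n \<noteq> lead_term (b i') mod n"
    and nontrivial: "\<exists>i<k. c i \<noteq> 0"
  shows "\<exists>i<k. c i \<noteq> 0 \<and> lead_term (vec_comb n k c b) = degree (c i) * n + lead_term (b i)"
proof -
  define I where "I = {i. i < k \<and> c i \<noteq> 0}"
  define L where "L i = degree (c i) * n + lead_term (b i)" for i
  have fin: "finite I" and ne: "I \<noteq> {}" using nontrivial unfolding I_def by auto
  have "Max (L ` I) \<in> L ` I" using fin ne by simp
  then obtain i0 where i0: "i0 \<in> I" "L i0 = Max (L ` I)" by auto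
  have max: "L i \<le> L i0" if "i \<in> I" for i using i0 fin that by simp
  have i0k: "i0 < k" using i0(1) unfolding I_def by simp
  have lead: "lead_term (c i \<cdot>\<^sub>v b i) = L i" "term_coeff (c i \<cdot>\<^sub>v b i) (L i) \<noteq> 0" if "i \<in> I" for i
  proof -
    have c: "c i \<noteq> 0" and b: "b i \<noteq> 0\<^sub>v (dim_vec (b i))" and d: "dim_vec (b i) = n"
      using that nz dims unfolding I_def by auto
    show "lead_term (c i \<cdot>\<^sub>v b i) = L i"
      using lead_term_smult(1)[OF c b] d unfolding L_def by simp
    then show "term_coeff (c i \<cdot>\<^sub>v b i) (L i) \<noteq> 0"
      using lead_term_smult(2)[OF c b] term_coeff_lead_term[OF b] c by simp
  qed
  have "term_coeff (c i \<cdot>\<^sub>v b i) t = 0" if "i < k" "i \<noteq> i0" "L i0 \<le> t" for i t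
  proof (cases "i \<in> I")
    case True
    have "lead_term (b i) mod n \<noteq> lead_term (b i0) mod n" using distinct that(1,2) i0k by blast
    then have "L i \<noteq> L i0" unfolding L_def by (metis mod_mult_self3)
    with max[OF True] have "L i < L i0" by simp
    then show ?thesis using term_coeff_gt_lead_term[of "c i \<cdot>\<^sub>v b i" t] lead(1)[OF True] that dims n by simp
  next
    case False
    then show ?thesis using that dims n unfolding I_def term_coeff_def by simp
  qed
  then have "lead_term (vec_comb n k c b) = L i0"
    using lead_term_vec_comb_dominant[where c = c and b = b and j = i0, OF n dims i0k lead[OF i0(1)]] by blast
  then show ?thesis using i0(1) unfolding I_def L_def by auto
qed

section \<open>Row modules\<close>

lemma row_module_vec_comb: "row_module M = {vec_comb (dim_col M) (dim_row M) c (row M) | c. True}"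
proof -
  have "vec (dim_col M) (\<lambda>j. \<Sum>i<dim_row M. c i * M $$ (i, j)) = vec_comb (dim_col M) (dim_row M) c (row M)" for c
    unfolding vec_comb_def by (rule eq_vecI) auto
  then show ?thesis unfolding row_module_def by auto
qed

lemma dim_vec_row_module: "v \<in> row_module M \<Longrightarrow> dim_vec v = dim_col M"
  unfolding row_module_def by auto

lemma zero_in_row_module: "0\<^sub>v (dim_col M) \<in> row_module M"
  unfolding row_module_def by (intro CollectI exI[of _ "\<lambda>i. 0"]) (auto intro!: eq_vecI)

lemma row_in_row_module:
  assumes "i < dim_row M"
  shows "row M i \<in> row_module M"
proof -
  have "(\<Sum>i'<dim_row M. (if i' = i then 1 else 0) * M $$ (i', j)) = M $$ (i, j)" for j
    using assms by (simp add: if_distrib[of "\<lambda>x. x * _"] sum.delta cong: if_cong)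
  then have "row M i = vec (dim_col M) (\<lambda>j. \<Sum>i'<dim_row M. (if i' = i then 1 else 0) * M $$ (i', j))"
    using assms by (intro eq_vecI) auto
  then show ?thesis
    unfolding row_module_def by (intro CollectI exI[of _ "\<lambda>i'. if i' = i then 1 else 0"]) simp
qed

lemma row_module_add:
  assumes "u \<in> row_module M" "w \<in> row_module M"
  shows "u + w \<in> row_module M"
proof -
  obtain cu cw where "u = vec (dim_col M) (\<lambda>j. \<Sum>i<dim_row M. cu i * M $$ (i, j))"
    and "w = vec (dim_col M) (\<lambda>j. \<Sum>i<dim_row M. cw i * M $$ (i, j))"
    using assms unfolding row_module_def by auto
  then have "u + w = vec (dim_col M) (\<lambda>j. \<Sum>i<dim_row M. (cu i + cw i) * M $$ (i, j))"
    by (intro eq_vecI) (auto simp: sum.distrib distrib_right)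
  then show ?thesis unfolding row_module_def by (intro CollectI exI[of _ "\<lambda>i. cu i + cw i"]) simp
qed

lemma row_module_smult:
  assumes "u \<in> row_module M"
  shows "a \<cdot>\<^sub>v u \<in> row_module M"
proof -
  obtain cu where "u = vec (dim_col M) (\<lambda>j. \<Sum>i<dim_row M. cu i * M $$ (i, j))"
    using assms unfolding row_module_def by auto
  then have "a \<cdot>\<^sub>v u = vec (dim_col M) (\<lambda>j. \<Sum>i<dim_row M. (a * cu i) * M $$ (i, j))"
    by (intro eq_vecI) (auto simp: sum_distrib_left mult.assoc)
  then show ?thesis unfolding row_module_def by (intro CollectI exI[of _ "\<lambda>i. a * cu i"]) simp
qed

lemma row_module_diff:
  fixes M :: "'a::comm_ring_1 mat"
  assumes "u \<in> row_module M" "w \<in> row_module M"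
  shows "u - w \<in> row_module M"
proof -
  have "u - w = u + (-1) \<cdot>\<^sub>v w"
    using dim_vec_row_module[OF assms(1)] dim_vec_row_module[OF assms(2)] by (intro eq_vecI) auto
  then show ?thesis using row_module_add[OF assms(1) row_module_smult[OF assms(2)]] by simp
qed

lemma row_module_subset:
  fixes M P :: "'a::comm_ring_1 mat"
  assumes dims: "dim_col P = dim_col M" and rows: "\<forall>i<dim_row P. row P i \<in> row_module M"
  shows "row_module P \<subseteq> row_module M"
proof
  fix v assume "v \<in> row_module P"
  then obtain c where v: "v = vec (dim_col P) (\<lambda>j. \<Sum>i<dim_row P. c i * P $$ (i, j))"
    unfolding row_module_def by auto
  have "vec (dim_col P) (\<lambda>j. \<Sum>i<k. c i * P $$ (i, j)) \<in> row_module M" if "k \<le> dim_row P" for k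
    using that
  proof (induction k)
    case 0
    then show ?case using zero_in_row_module[of M] dims by (simp add: zero_vec_def)
  next
    case (Suc k)
    have "vec (dim_col P) (\<lambda>j. \<Sum>i<Suc k. c i * P $$ (i, j)) =
      vec (dim_col P) (\<lambda>j. \<Sum>i<k. c i * P $$ (i, j)) + c k \<cdot>\<^sub>v row P k"
      using Suc.prems by (intro eq_vecI) auto
    then show ?case
      using row_module_add[OF Suc.IH row_module_smult[OF rows[rule_format]]] Suc.prems by simp
  qed
  then show "v \<in> row_module M" using v by simp
qed

section \<open>Existence of the Popov form\<close>

definition lead_terms :: "'a::field poly mat \<Rightarrow> nat set" where
  "lead_terms M = {lead_term v | v. v \<in> row_module M \<and> v \<noteq> 0\<^sub>v (dim_col M)}"

definition pivot_positions :: "'a::field poly mat \<Rightarrow> nat set" where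
  "pivot_positions M = (\<lambda>t. t mod dim_col M) ` lead_terms M"

definition min_lead_term :: "'a::field poly mat \<Rightarrow> nat \<Rightarrow> nat" where
  "min_lead_term M k = (LEAST t. t \<in> lead_terms M \<and> t mod dim_col M = k)"

definition minimal_monic :: "'a::field poly mat \<Rightarrow> nat \<Rightarrow> 'a poly vec set" where
  "minimal_monic M k = {p \<in> row_module M. p \<noteq> 0\<^sub>v (dim_col M) \<and>
     lead_term p = min_lead_term M k \<and> term_coeff p (min_lead_term M k) = 1}"

definition reducible_terms :: "'a::field poly mat \<Rightarrow> 'a poly vec \<Rightarrow> nat set" where
  "reducible_terms M p = {t. term_coeff p t \<noteq> 0 \<and> t \<noteq> lead_term p \<and>
     t mod dim_col M \<in> pivot_positions M \<and> min_lead_term M (t mod dim_col M) \<le> t}"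

text \<open>Weighting a term \<open>t\<close> by \<open>2\<^sup>t\<close> compares sets of reducible terms from the top down, so
  removing the largest reducible term lowers the weight whatever smaller terms it creates.\<close>

definition reducibility :: "'a::field poly mat \<Rightarrow> 'a poly vec \<Rightarrow> nat" where
  "reducibility M p = (\<Sum>t\<in>reducible_terms M p. 2 ^ t)"

lemma lead_term_in_lead_terms:
  "v \<in> row_module M \<Longrightarrow> v \<noteq> 0\<^sub>v (dim_col M) \<Longrightarrow> lead_term v \<in> lead_terms M"
  unfolding lead_terms_def by auto

lemma pivot_positions_subset: "pivot_positions M \<subseteq> {..<dim_col M}"
proof
  fix k assume "k \<in> pivot_positions M"
  then obtain v where v: "v \<in> row_module M" "v \<noteq> 0\<^sub>v (dim_col M)" "k = lead_term v mod dim_col M"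
    unfolding pivot_positions_def lead_terms_def by auto
  then have "dim_col M > 0" using vec_nonzero_dim_pos[of v] dim_vec_row_module[OF v(1)] by simp
  then show "k \<in> {..<dim_col M}" using v(3) by simp
qed

lemma finite_pivot_positions: "finite (pivot_positions M)"
  using finite_subset[OF pivot_positions_subset] by blast

lemma min_lead_term:
  assumes "k \<in> pivot_positions M"
  shows "min_lead_term M k \<in> lead_terms M" "min_lead_term M k mod dim_col M = k"
    "\<And>t. t \<in> lead_terms M \<Longrightarrow> t mod dim_col M = k \<Longrightarrow> min_lead_term M k \<le> t"
proof -
  obtain t where "t \<in> lead_terms M" "t mod dim_col M = k"
    using assms unfolding pivot_positions_def by auto
  then show "min_lead_term M k \<in> lead_terms M" "min_lead_term M k mod dim_col M = k"
    using LeastI[of "\<lambda>t. t \<in> lead_terms M \<and> t mod dim_col M = k"] unfolding min_lead_term_def by auto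
  show "\<And>t. t \<in> lead_terms M \<Longrightarrow> t mod dim_col M = k \<Longrightarrow> min_lead_term M k \<le> t"
    unfolding min_lead_term_def by (rule Least_le) simp
qed

lemma minimal_monic_nonempty:
  fixes M :: "'a::field poly mat"
  assumes k: "k \<in> pivot_positions M"
  shows "\<exists>p. p \<in> minimal_monic M k"
proof -
  obtain v where v: "v \<in> row_module M" "v \<noteq> 0\<^sub>v (dim_col M)" "lead_term v = min_lead_term M k"
    using min_lead_term(1)[OF k] unfolding lead_terms_def by auto
  have v': "v \<noteq> 0\<^sub>v (dim_vec v)" using v(2) dim_vec_row_module[OF v(1)] by simp
  define a where "a = term_coeff v (lead_term v)"
  have a: "a \<noteq> 0" unfolding a_def using term_coeff_lead_term[OF v'] .
  then have c: "[:inverse a:] \<noteq> 0" by simp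
  let ?p = "[:inverse a:] \<cdot>\<^sub>v v"
  have lead: "lead_term ?p = lead_term v" and monic: "term_coeff ?p (lead_term ?p) = 1"
    using lead_term_smult[OF c v'] a unfolding a_def by auto
  have "?p \<noteq> 0\<^sub>v (dim_col M)"
    using vec_nonzero_if_term_coeff[of ?p "lead_term ?p"] monic vec_nonzero_dim_pos[OF v']
      dim_vec_row_module[OF v(1)] by simp
  then have "?p \<in> minimal_monic M k"
    unfolding minimal_monic_def using row_module_smult[OF v(1)] lead monic v(3) by auto
  then show ?thesis by blast
qed

lemma sum_pow2_less:
  assumes "A \<subseteq> {..<m}"
  shows "(\<Sum>t\<in>A. (2::nat) ^ t) < 2 ^ m"
proof -
  have "(\<Sum>t\<in>A. (2::nat) ^ t) \<le> (\<Sum>t<m. 2 ^ t)" by (rule sum_mono2[OF _ assms]) auto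
  also have "(\<Sum>t<m. (2::nat) ^ t) < 2 ^ m" by (induction m) auto
  finally show ?thesis .
qed

lemma reduce_reducible_term:
  fixes M :: "'a::field poly mat"
  assumes p: "p \<in> minimal_monic M k" and t0: "t0 \<in> reducible_terms M p"
  obtains p' where "p' \<in> minimal_monic M k" "term_coeff p' t0 = 0"
    "\<And>t. t0 < t \<Longrightarrow> term_coeff p' t = term_coeff p t"
proof -
  let ?n = "dim_col M"
  have pM: "p \<in> row_module M" and pnz: "p \<noteq> 0\<^sub>v ?n"
    and lead_p: "lead_term p = min_lead_term M k" "term_coeff p (lead_term p) = 1"
    using p unfolding minimal_monic_def by auto
  have dim_p: "dim_vec p = ?n" using dim_vec_row_module[OF pM] .
  have n: "?n > 0" using vec_nonzero_dim_pos[of p] pnz dim_p by simp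
  define k0 where "k0 = t0 mod ?n"
  have k0: "k0 \<in> pivot_positions M" "min_lead_term M k0 \<le> t0" "term_coeff p t0 \<noteq> 0" "t0 \<noteq> lead_term p"
    using t0 unfolding reducible_terms_def k0_def by auto
  have t0_less: "t0 < lead_term p" using le_lead_term[OF k0(3)] n dim_p k0(4) by simp
  obtain q where "q \<in> minimal_monic M k0" using minimal_monic_nonempty[OF k0(1)] by blast
  then have qM: "q \<in> row_module M" and qnz: "q \<noteq> 0\<^sub>v ?n" and lead_q: "lead_term q = min_lead_term M k0"
    and monic_q: "term_coeff q (lead_term q) = 1"
    unfolding minimal_monic_def by auto
  have dim_q: "dim_vec q = ?n" using dim_vec_row_module[OF qM] .
  define s where "s = monom (term_coeff p t0) (t0 div ?n - lead_term q div ?n) \<cdot>\<^sub>v q"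
  have reduced: "term_coeff (p - s) t0 = 0" "\<And>t. t0 < t \<Longrightarrow> term_coeff (p - s) t = term_coeff p t"
    using reduce_term[of p q t0] dim_p dim_q qnz monic_q lead_q min_lead_term(2)[OF k0(1)] k0(2)
    unfolding s_def k0_def by auto
  have p'M: "p - s \<in> row_module M" unfolding s_def by (intro row_module_diff pM row_module_smult qM)
  have dim_p': "dim_vec (p - s) = ?n" using dim_vec_row_module[OF p'M] .
  have lead_p': "lead_term (p - s) = lead_term p"
    by (rule lead_term_eqI) (use reduced(2) t0_less lead_p term_coeff_gt_lead_term[of p] n dim_p dim_p' in auto)
  have "p - s \<in> minimal_monic M k"
    unfolding minimal_monic_def
    using p'M lead_p' lead_p reduced(2)[OF t0_less] vec_nonzero_if_term_coeff[of "p - s" "lead_term p"]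
      dim_p' n by auto
  with reduced that show ?thesis by blast
qed

lemma reduce_largest_reducible_term:
  fixes M :: "'a::field poly mat"
  assumes p: "p \<in> minimal_monic M k" and reducible: "reducible_terms M p \<noteq> {}"
  shows "\<exists>p' \<in> minimal_monic M k. reducibility M p' < reducibility M p"
proof -
  have pM: "p \<in> row_module M" and pnz: "p \<noteq> 0\<^sub>v (dim_col M)"
    using p unfolding minimal_monic_def by auto
  then have "dim_vec p > 0" using vec_nonzero_dim_pos[of p] dim_vec_row_module[OF pM] by simp
  then have fin: "finite (reducible_terms M p)"
    using finite_subset[OF _ finite_term_support[of p]] unfolding reducible_terms_def by auto
  define t0 where "t0 = Max (reducible_terms M p)"
  have t0: "t0 \<in> reducible_terms M p" unfolding t0_def using fin reducible by simp
  obtain p' where p': "p' \<in> minimal_monic M k" "term_coeff p' t0 = 0"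
    "\<And>t. t0 < t \<Longrightarrow> term_coeff p' t = term_coeff p t"
    using reduce_reducible_term[OF p t0] by blast
  have lead: "lead_term p' = lead_term p" using p p'(1) unfolding minimal_monic_def by simp
  have "reducible_terms M p' \<subseteq> {..<t0}"
  proof
    fix t assume t: "t \<in> reducible_terms M p'"
    have "t \<noteq> t0" using t p'(2) unfolding reducible_terms_def by auto
    moreover have "\<not> t0 < t"
    proof
      assume "t0 < t"
      then have "t \<in> reducible_terms M p" using t p'(3) lead unfolding reducible_terms_def by auto
      then show False using Max_ge[OF fin] \<open>t0 < t\<close> unfolding t0_def by fastforce
    qed
    ultimately show "t \<in> {..<t0}" by simp
  qed
  then have "reducibility M p' < 2 ^ t0" unfolding reducibility_def by (rule sum_pow2_less)
  also have "2 ^ t0 \<le> reducibility M p"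
    unfolding reducibility_def using member_le_sum[of t0 _ "\<lambda>t. (2::nat) ^ t"] fin t0 by simp
  finally show ?thesis using p'(1) by blast
qed

lemma reduced_minimal_monic_exists:
  fixes M :: "'a::field poly mat"
  assumes k: "k \<in> pivot_positions M"
  shows "\<exists>p. p \<in> minimal_monic M k \<and> reducible_terms M p = {}"
proof -
  obtain p0 where "p0 \<in> minimal_monic M k" using minimal_monic_nonempty[OF k] by blast
  then obtain p where p: "p \<in> minimal_monic M k"
    and least: "\<And>p'. p' \<in> minimal_monic M k \<Longrightarrow> reducibility M p \<le> reducibility M p'"
    using ex_has_least_nat[of "\<lambda>p. p \<in> minimal_monic M k" p0 "reducibility M"] by blast
  have "reducible_terms M p = {}"
    using reduce_largest_reducible_term[OF p] least leD by blast
  with p show ?thesis by blast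
qed

definition popov_row :: "'a::field poly mat \<Rightarrow> nat \<Rightarrow> 'a poly vec" where
  "popov_row M k = (SOME p. p \<in> minimal_monic M k \<and> reducible_terms M p = {})"

lemma popov_row:
  fixes M :: "'a::field poly mat"
  assumes k: "k \<in> pivot_positions M"
  shows "popov_row M k \<in> row_module M" "popov_row M k \<noteq> 0\<^sub>v (dim_col M)"
    "dim_vec (popov_row M k) = dim_col M" "lead_term (popov_row M k) = min_lead_term M k"
    "term_coeff (popov_row M k) (min_lead_term M k) = 1" "reducible_terms M (popov_row M k) = {}"
proof -
  have "popov_row M k \<in> minimal_monic M k \<and> reducible_terms M (popov_row M k) = {}"
    unfolding popov_row_def by (rule someI_ex[OF reduced_minimal_monic_exists[OF k]])
  then show "popov_row M k \<in> row_module M" "popov_row M k \<noteq> 0\<^sub>v (dim_col M)"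
    "dim_vec (popov_row M k) = dim_col M" "lead_term (popov_row M k) = min_lead_term M k"
    "term_coeff (popov_row M k) (min_lead_term M k) = 1" "reducible_terms M (popov_row M k) = {}"
    using dim_vec_row_module unfolding minimal_monic_def by auto
qed

lemma pivot_entry_popov_row:
  fixes M :: "'a::field poly mat"
  assumes k: "k \<in> pivot_positions M"
  shows "pivot_index (popov_row M k) = k" "lead_coeff (popov_row M k $ k) = 1"
    "degree (popov_row M k $ k) = min_lead_term M k div dim_col M"
proof -
  let ?p = "popov_row M k"
  have nz: "?p \<noteq> 0\<^sub>v (dim_vec ?p)" using popov_row(2,3)[OF k] by simp
  note L = lead_term_pivot_entry[OF nz] and P = popov_row[OF k]
  have "lead_term ?p mod dim_vec ?p = k" using min_lead_term(2)[OF k] P(3,4) by simp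
  then show "pivot_index ?p = k" "lead_coeff (?p $ k) = 1" "degree (?p $ k) = min_lead_term M k div dim_col M"
    using L(3,4,5) P(3,4,5) by auto
qed

lemma popov_row_off_pivot:
  fixes M :: "'a::field poly mat"
  assumes k: "k \<in> pivot_positions M" and k': "k' \<in> pivot_positions M" and ne: "k \<noteq> k'"
  shows "popov_row M k' $ k = 0 \<or> degree (popov_row M k' $ k) < degree (popov_row M k $ k)"
proof (rule ccontr)
  let ?q = "popov_row M k'" and ?n = "dim_col M"
  assume "\<not> ?thesis"
  then have nz: "?q $ k \<noteq> 0" and deg: "min_lead_term M k div ?n \<le> degree (?q $ k)"
    using pivot_entry_popov_row(3)[OF k] by auto
  have kn: "k < ?n" using pivot_positions_subset k by auto
  have dim_q: "dim_vec ?q = ?n" using popov_row(3)[OF k'] .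
  define t where "t = degree (?q $ k) * ?n + k"
  have "term_coeff ?q t \<noteq> 0" unfolding t_def using term_coeff_encode[of k ?q] kn dim_q nz by simp
  moreover have pos_t: "t mod ?n = k" unfolding t_def using kn by simp
  moreover have "t \<noteq> lead_term ?q"
    using pos_t popov_row(4)[OF k'] min_lead_term(2)[OF k'] ne by auto
  moreover have "min_lead_term M k \<le> t"
  proof -
    have "min_lead_term M k = min_lead_term M k div ?n * ?n + k"
      using div_mult_mod_eq[of "min_lead_term M k" ?n] min_lead_term(2)[OF k] by simp
    also have "\<dots> \<le> t" unfolding t_def using deg by simp
    finally show ?thesis .
  qed
  ultimately have "t \<in> reducible_terms M ?q" unfolding reducible_terms_def using k by simp
  then show False using popov_row(6)[OF k'] by simp
qed

definition popov_matrix :: "'a::field poly mat \<Rightarrow> 'a poly mat" where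
  "popov_matrix M = mat_of_rows (dim_col M) (map (popov_row M) (sorted_list_of_set (pivot_positions M)))"

lemma dim_popov_matrix [simp]:
  "dim_col (popov_matrix M) = dim_col M"
  "dim_row (popov_matrix M) = card (pivot_positions M)"
  unfolding popov_matrix_def by simp_all

lemma row_popov_matrix:
  fixes M :: "'a::field poly mat"
  assumes i: "i < dim_row (popov_matrix M)"
  defines "k \<equiv> sorted_list_of_set (pivot_positions M) ! i"
  shows "k \<in> pivot_positions M" "row (popov_matrix M) i = popov_row M k"
proof -
  let ?ks = "sorted_list_of_set (pivot_positions M)"
  have il: "i < length ?ks" using i by simp
  show k: "k \<in> pivot_positions M" unfolding k_def using nth_mem[OF il] finite_pivot_positions[of M] by simp
  have "map (popov_row M) ?ks ! i = popov_row M k" unfolding k_def using il by simp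
  moreover have "popov_row M k \<in> carrier_vec (dim_col M)" using popov_row(3)[OF k] by (rule carrier_vecI)
  ultimately show "row (popov_matrix M) i = popov_row M k"
    unfolding popov_matrix_def using mat_of_rows_row[of i "map (popov_row M) ?ks" "dim_col M"] il by simp
qed

lemma is_popov_popov_matrix:
  fixes M :: "'a::field poly mat"
  shows "is_popov (popov_matrix M)"
proof -
  let ?P = "popov_matrix M" and ?ks = "sorted_list_of_set (pivot_positions M)"
  note R = row_popov_matrix
  have piv: "pivot_index (row ?P i) = ?ks ! i" if "i < dim_row ?P" for i
    using R[OF that] pivot_entry_popov_row(1) by simp
  have entry: "?P $$ (i', j) = popov_row M (?ks ! i') $ j" if "i' < dim_row ?P" "j < dim_col M" for i' j
    using R(2)[OF that(1)] that by (metis dim_popov_matrix(1) index_row(1))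
  have kn: "?ks ! i < dim_col M" if "i < dim_row ?P" for i
    using R(1)[OF that] pivot_positions_subset by auto
  show ?thesis
    unfolding is_popov_def
  proof (intro conjI allI impI)
    fix i assume i: "i < dim_row ?P"
    show "row ?P i \<noteq> 0\<^sub>v (dim_col ?P)" using R[OF i] popov_row(2) by simp
    show "lead_coeff (?P $$ (i, pivot_index (row ?P i))) = 1"
      using piv[OF i] entry[OF i kn[OF i]] pivot_entry_popov_row(2)[OF R(1)[OF i]] by simp
  next
    fix i i' assume "i < i' \<and> i' < dim_row ?P"
    then show "pivot_index (row ?P i) < pivot_index (row ?P i')"
      using piv strict_sorted_list_of_set[of "pivot_positions M"]
      unfolding sorted_wrt_iff_nth_less by auto
  next
    fix i i' assume i: "i < dim_row ?P" and i': "i' < dim_row ?P" and ne: "i' \<noteq> i"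
    have "?ks ! i \<noteq> ?ks ! i'"
      using ne i i' distinct_sorted_list_of_set[of "pivot_positions M"] by (simp add: nth_eq_iff_index_eq)
    then show "?P $$ (i', pivot_index (row ?P i)) = 0 \<or>
        degree (?P $$ (i', pivot_index (row ?P i))) < degree (?P $$ (i, pivot_index (row ?P i)))"
      unfolding piv[OF i] entry[OF i kn[OF i]] entry[OF i' kn[OF i]]
      using popov_row_off_pivot[OF R(1)[OF i] R(1)[OF i']] by simp
  qed
qed

lemma popov_row_in_popov_matrix:
  fixes M :: "'a::field poly mat"
  assumes "k \<in> pivot_positions M"
  shows "popov_row M k \<in> row_module (popov_matrix M)"
proof -
  obtain i where i: "i < length (sorted_list_of_set (pivot_positions M))"
    "sorted_list_of_set (pivot_positions M) ! i = k"
    using assms finite_pivot_positions[of M] by (metis in_set_conv_nth set_sorted_list_of_set)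
  then show ?thesis using row_in_row_module[of i "popov_matrix M"] row_popov_matrix(2)[of i M] by simp
qed

text \<open>The leading term of a nonzero element of the module is divisible by the minimal leading
  term in its position, so a monomial multiple of a row of \<open>popov_matrix M\<close> cancels it.\<close>

lemma reduce_by_popov_matrix:
  fixes M :: "'a::field poly mat"
  assumes v: "v \<in> row_module M" and nz: "v \<noteq> 0\<^sub>v (dim_col M)"
  obtains s where "s \<in> row_module (popov_matrix M)" "v - s \<in> row_module M"
    "v - s = 0\<^sub>v (dim_col M) \<or> lead_term (v - s) < lead_term v"
proof -
  let ?n = "dim_col M"
  have dim_v: "dim_vec v = ?n" using dim_vec_row_module[OF v] .
  have n: "?n > 0" using vec_nonzero_dim_pos[of v] nz dim_v by simp
  define k where "k = lead_term v mod ?n"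
  have k: "k \<in> pivot_positions M"
    unfolding k_def pivot_positions_def using lead_term_in_lead_terms[OF v nz] by simp
  let ?q = "popov_row M k"
  note Q = popov_row[OF k]
  have le: "lead_term ?q \<le> lead_term v"
    using Q(4) min_lead_term(3)[OF k lead_term_in_lead_terms[OF v nz]] k_def by simp
  define s where "s = monom (term_coeff v (lead_term v)) (lead_term v div ?n - lead_term ?q div ?n) \<cdot>\<^sub>v ?q"
  have reduced: "term_coeff (v - s) (lead_term v) = 0"
    "\<And>t. lead_term v < t \<Longrightarrow> term_coeff (v - s) t = term_coeff v t"
    using reduce_term[of v ?q "lead_term v"] dim_v Q(2-5) min_lead_term(2)[OF k] le
    unfolding s_def k_def by auto
  have sP: "s \<in> row_module (popov_matrix M)"
    unfolding s_def by (intro row_module_smult popov_row_in_popov_matrix k)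
  have rM: "v - s \<in> row_module M" unfolding s_def by (intro row_module_diff v row_module_smult Q(1))
  have "lead_term (v - s) < lead_term v" if r: "v - s \<noteq> 0\<^sub>v ?n"
  proof -
    have "term_coeff (v - s) t = 0" if "lead_term v \<le> t" for t
      using reduced term_coeff_gt_lead_term[of v t] that n dim_v by (cases "t = lead_term v") auto
    then show ?thesis using term_coeff_lead_term[of "v - s"] r dim_vec_row_module[OF rM] not_le by metis
  qed
  with sP rM that show ?thesis by blast
qed

lemma row_module_popov_matrix:
  fixes M :: "'a::field poly mat"
  shows "row_module (popov_matrix M) = row_module M"
proof
  show "row_module (popov_matrix M) \<subseteq> row_module M"
    by (rule row_module_subset) (auto simp: row_popov_matrix popov_row(1))
  show "row_module M \<subseteq> row_module (popov_matrix M)"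
  proof
    fix v assume "v \<in> row_module M"
    then show "v \<in> row_module (popov_matrix M)"
    proof (induction "lead_term v" arbitrary: v rule: less_induct)
      case less
      show ?case
      proof (cases "v = 0\<^sub>v (dim_col M)")
        case True
        then show ?thesis using zero_in_row_module[of "popov_matrix M"] by simp
      next
        case False
        then obtain s where s: "s \<in> row_module (popov_matrix M)" "v - s \<in> row_module M"
          "v - s = 0\<^sub>v (dim_col M) \<or> lead_term (v - s) < lead_term v"
          using reduce_by_popov_matrix[OF less.prems] by blast
        then have "v - s \<in> row_module (popov_matrix M)"
          using less.hyps zero_in_row_module[of "popov_matrix M"] by auto
        moreover have "v = (v - s) + s"
          using dim_vec_row_module[OF less.prems] dim_vec_row_module[OF s(2)] by (intro eq_vecI) auto
        ultimately show ?thesis using row_module_add[OF _ s(1)] by metis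
      qed
    qed
  qed
qed

lemma popov_form_exists:
  fixes M :: "'a::field poly mat"
  shows "\<exists>P. is_popov P \<and> dim_col P = dim_col M \<and> row_module P = row_module M"
  using is_popov_popov_matrix row_module_popov_matrix dim_popov_matrix(1) by blast

section \<open>Uniqueness of the Popov form\<close>

lemma popov_row_nonzero:
  assumes "is_popov P" "i < dim_row P"
  shows "row P i \<noteq> 0\<^sub>v (dim_vec (row P i))"
  using assms unfolding is_popov_def by auto

lemma pivot_index_popov_row:
  fixes P :: "'a::field poly mat"
  assumes "is_popov P" "i < dim_row P"
  shows "pivot_index (row P i) = lead_term (row P i) mod dim_col P"
  using lead_term_pivot_entry(5)[OF popov_row_nonzero[OF assms]] by simp

lemma popov_pivots_distinct:
  assumes "is_popov P" "i < dim_row P" "i' < dim_row P" "i \<noteq> i'"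
  shows "pivot_index (row P i) \<noteq> pivot_index (row P i')"
  using assms unfolding is_popov_def by (metis less_irrefl nat_neq_iff)

lemma popov_lead_term_divisible:
  fixes P :: "'a::field poly mat"
  assumes P: "is_popov P" and v: "v \<in> row_module P" and nz: "v \<noteq> 0\<^sub>v (dim_col P)"
  obtains i where "i < dim_row P" "lead_term (row P i) mod dim_col P = lead_term v mod dim_col P"
    "lead_term (row P i) \<le> lead_term v"
proof -
  let ?n = "dim_col P" and ?r = "dim_row P"
  obtain c where vc: "v = vec_comb ?n ?r c (row P)" using v unfolding row_module_vec_comb by auto
  have n: "?n > 0" using vec_nonzero_dim_pos[of v] nz dim_vec_row_module[OF v] by simp
  have "\<exists>i<?r. c i \<noteq> 0"
  proof (rule ccontr)
    assume "\<not> ?thesis"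
    then have "v = 0\<^sub>v ?n" unfolding vc vec_comb_def by (intro eq_vecI) auto
    with nz show False by simp
  qed
  moreover have "\<forall>i<?r. \<forall>i'<?r. i \<noteq> i' \<longrightarrow> lead_term (row P i) mod ?n \<noteq> lead_term (row P i') mod ?n"
    using popov_pivots_distinct[OF P] pivot_index_popov_row[OF P] by metis
  moreover have "\<forall>i<?r. row P i \<noteq> 0\<^sub>v ?n" using popov_row_nonzero[OF P] by simp
  ultimately obtain i where "i < ?r" "lead_term v = degree (c i) * ?n + lead_term (row P i)"
    using lead_term_vec_comb[OF n, of ?r "row P" c] unfolding vc[symmetric] by auto
  then show ?thesis using that by simp
qed

lemma popov_row_term_coeff:
  fixes P :: "'a::field poly mat"
  assumes P: "is_popov P" and i: "i < dim_row P" and i2: "i2 < dim_row P"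
    and pos: "lead_term (row P i2) mod dim_col P = t mod dim_col P" and le: "lead_term (row P i2) \<le> t"
  shows "term_coeff (row P i) t = (if t = lead_term (row P i) then 1 else 0)"
proof -
  let ?n = "dim_col P" and ?k = "t mod dim_col P"
  note L = lead_term_pivot_entry[OF popov_row_nonzero[OF P i]]
  note L2 = lead_term_pivot_entry[OF popov_row_nonzero[OF P i2]]
  have n: "?n > 0" using vec_nonzero_dim_pos[OF popov_row_nonzero[OF P i2]] by simp
  have piv2: "pivot_index (row P i2) = ?k" using L2(5) pos by simp
  have coeff: "term_coeff (row P i) t = coeff (P $$ (i, ?k)) (t div ?n)"
    unfolding term_coeff_def using i n by simp
  show ?thesis
  proof (cases "i2 = i")
    case True
    show ?thesis
    proof (cases "t = lead_term (row P i)")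
      case lead: True
      have "term_coeff (row P i) t = lead_coeff (P $$ (i, pivot_index (row P i)))"
        using L(1,4,5) lead i by simp
      then show ?thesis using P i lead unfolding is_popov_def by simp
    next
      case False
      then show ?thesis using le True term_coeff_gt_lead_term[of "row P i" t] n by simp
    qed
  next
    case False
    have "pivot_index (row P i) \<noteq> ?k" using popov_pivots_distinct[OF P i i2] False piv2 by simp
    then have "t \<noteq> lead_term (row P i)" using L(5) by auto
    moreover have "P $$ (i, ?k) = 0 \<or> degree (P $$ (i, ?k)) < degree (P $$ (i2, ?k))"
      using P i i2 False piv2 unfolding is_popov_def by metis
    moreover have "degree (P $$ (i2, ?k)) \<le> t div ?n"
      using L2(3) pos div_le_mono[OF le] i2 n by simp
    ultimately show ?thesis using coeff by (auto intro: coeff_eq_0)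
  qed
qed

lemma popov_lead_terms_match:
  fixes P Q :: "'a::field poly mat"
  assumes P: "is_popov P" and Q: "is_popov Q" and dims: "dim_col P = dim_col Q"
    and modules: "row_module P = row_module Q" and i: "i < dim_row P"
  obtains i' where "i' < dim_row Q" "lead_term (row Q i') = lead_term (row P i)"
proof -
  let ?n = "dim_col P"
  have "row P i \<in> row_module Q" "row P i \<noteq> 0\<^sub>v (dim_col Q)"
    using row_in_row_module[OF i] modules popov_row_nonzero[OF P i] dims by auto
  then obtain i' where i': "i' < dim_row Q" "lead_term (row Q i') mod ?n = lead_term (row P i) mod ?n"
    "lead_term (row Q i') \<le> lead_term (row P i)"
    using popov_lead_term_divisible[OF Q] dims by metis
  have "row Q i' \<in> row_module P" "row Q i' \<noteq> 0\<^sub>v (dim_col P)"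
    using row_in_row_module[OF i'(1)] modules popov_row_nonzero[OF Q i'(1)] dims by auto
  then obtain i'' where i'': "i'' < dim_row P" "lead_term (row P i'') mod ?n = lead_term (row Q i') mod ?n"
    "lead_term (row P i'') \<le> lead_term (row Q i')"
    using popov_lead_term_divisible[OF P] by metis
  have "i'' = i"
    using popov_pivots_distinct[OF P i''(1) i] pivot_index_popov_row[OF P] i i'' i'(2) by metis
  with i' i'' show ?thesis using that by (metis le_antisym)
qed

lemma popov_row_eq_if_lead_term_eq:
  fixes P Q :: "'a::field poly mat"
  assumes P: "is_popov P" and Q: "is_popov Q" and dims: "dim_col P = dim_col Q"
    and modules: "row_module P = row_module Q" and i: "i < dim_row P" and i': "i' < dim_row Q"
    and lead: "lead_term (row P i) = lead_term (row Q i')"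
  shows "row P i = row Q i'"
proof (rule ccontr)
  let ?n = "dim_col P" and ?r = "row P i - row Q i'"
  assume ne: "row P i \<noteq> row Q i'"
  have rP: "?r \<in> row_module P"
    using row_module_diff[OF row_in_row_module[OF i]] row_in_row_module[OF i'] modules by simp
  have rnz: "?r \<noteq> 0\<^sub>v ?n"
  proof
    assume "?r = 0\<^sub>v ?n"
    then have "row P i = row Q i'" using dims by (intro eq_vecI) (auto simp: vec_eq_iff)
    with ne show False by simp
  qed
  have n: "?n > 0" using vec_nonzero_dim_pos[of ?r] rnz dims by simp
  obtain i2 where i2: "i2 < dim_row P" "lead_term (row P i2) mod ?n = lead_term ?r mod ?n"
    "lead_term (row P i2) \<le> lead_term ?r"
    using popov_lead_term_divisible[OF P rP rnz] by metis
  obtain i3 where i3: "i3 < dim_row Q" "lead_term (row Q i3) = lead_term (row P i2)"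
    using popov_lead_terms_match[OF P Q dims modules i2(1)] by metis
  have "term_coeff ?r (lead_term ?r) = term_coeff (row P i) (lead_term ?r) - term_coeff (row Q i') (lead_term ?r)"
    using term_coeff_diff[of "row P i" "row Q i'" "lead_term ?r"] dims n by simp
  also have "\<dots> = 0"
    using popov_row_term_coeff[OF P i i2] popov_row_term_coeff[OF Q i' i3(1), of "lead_term ?r"] i2 i3(2)
      lead dims by simp
  finally show False using term_coeff_lead_term[of ?r] rnz dims by simp
qed

lemma popov_pivots_subset:
  fixes P Q :: "'a::field poly mat"
  assumes P: "is_popov P" and Q: "is_popov Q" and dims: "dim_col P = dim_col Q"
    and modules: "row_module P = row_module Q"
  shows "set (map (\<lambda>i. pivot_index (row P i)) [0..<dim_row P])
    \<subseteq> set (map (\<lambda>i. pivot_index (row Q i)) [0..<dim_row Q])"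
proof
  fix x assume "x \<in> set (map (\<lambda>i. pivot_index (row P i)) [0..<dim_row P])"
  then obtain i where i: "i < dim_row P" "x = pivot_index (row P i)" by auto
  obtain i' where i': "i' < dim_row Q" "lead_term (row Q i') = lead_term (row P i)"
    using popov_lead_terms_match[OF P Q dims modules i(1)] by metis
  then have "x = pivot_index (row Q i')"
    using i pivot_index_popov_row[OF P i(1)] pivot_index_popov_row[OF Q i'(1)] dims by simp
  with i'(1) show "x \<in> set (map (\<lambda>i. pivot_index (row Q i)) [0..<dim_row Q])" by simp
qed

lemma popov_unique:
  fixes P Q :: "'a::field poly mat"
  assumes P: "is_popov P" and Q: "is_popov Q" and dims: "dim_col P = dim_col Q"
    and modules: "row_module P = row_module Q"
  shows "P = Q"
proof -
  define ps where "ps = map (\<lambda>i. pivot_index (row P i)) [0..<dim_row P]"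
  define qs where "qs = map (\<lambda>i. pivot_index (row Q i)) [0..<dim_row Q]"
  have "sorted_wrt (<) ps" "sorted_wrt (<) qs"
    using P Q unfolding ps_def qs_def sorted_wrt_iff_nth_less is_popov_def by auto
  moreover have "set ps = set qs"
    using popov_pivots_subset[OF P Q dims modules] popov_pivots_subset[OF Q P dims[symmetric] modules[symmetric]]
    unfolding ps_def qs_def by blast
  ultimately have same: "ps = qs"
    using sorted_distinct_set_unique strict_sorted_iff by blast
  then have rows: "dim_row P = dim_row Q" unfolding ps_def qs_def using length_map by (metis diff_zero length_upt)
  have "row P i = row Q i" if i: "i < dim_row P" for i
  proof -
    obtain i' where i': "i' < dim_row Q" "lead_term (row Q i') = lead_term (row P i)"
      using popov_lead_terms_match[OF P Q dims modules i] by metis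
    have "pivot_index (row Q i') = pivot_index (row Q i)"
      using arg_cong[OF same, of "\<lambda>l. l ! i"] i rows pivot_index_popov_row[OF P i]
        pivot_index_popov_row[OF Q i'(1)] i'(2) dims unfolding ps_def qs_def by simp
    then have "i' = i" using popov_pivots_distinct[OF Q i'(1), of i] i rows by fastforce
    then show ?thesis using popov_row_eq_if_lead_term_eq[OF P Q dims modules i i'(1)] i'(2) by simp
  qed
  then show ?thesis using rows dims by (intro eq_matI) (metis index_row(1))+
qed

lemma popov_form:
  fixes M :: "'a::field poly mat"
  shows "is_popov (popov_form M)" "dim_col (popov_form M) = dim_col M"
    "row_module (popov_form M) = row_module M"
proof -
  have "\<exists>!P. is_popov P \<and> dim_col P = dim_col M \<and> row_module P = row_module M"
    using popov_form_exists popov_unique by (metis (mono_tags, lifting))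
  then show "is_popov (popov_form M)" "dim_col (popov_form M) = dim_col M"
    "row_module (popov_form M) = row_module M"
    unfolding popov_form_def using theI' by (metis (mono_tags, lifting))+
qed

lemma set_pivot_support:
  fixes M :: "'a::field poly mat"
  shows "set (pivot_support M) = {pivot_index v | v. v \<in> row_module M \<and> v \<noteq> 0\<^sub>v (dim_col M)}"
proof -
  let ?P = "popov_form M"
  note P = popov_form[of M]
  have "set (pivot_support M) = {pivot_index (row ?P i) | i. i < dim_row ?P}"
    unfolding pivot_support_def by auto
  also have "\<dots> = {pivot_index v | v. v \<in> row_module M \<and> v \<noteq> 0\<^sub>v (dim_col M)}"
  proof (intro equalityI subsetI)
    fix x assume "x \<in> {pivot_index (row ?P i) | i. i < dim_row ?P}"
    then obtain i where i: "i < dim_row ?P" "x = pivot_index (row ?P i)" by auto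
    then have "row ?P i \<in> row_module M" "row ?P i \<noteq> 0\<^sub>v (dim_col M)"
      using row_in_row_module[OF i(1)] popov_row_nonzero[OF P(1) i(1)] P by auto
    with i show "x \<in> {pivot_index v | v. v \<in> row_module M \<and> v \<noteq> 0\<^sub>v (dim_col M)}" by auto
  next
    fix x assume "x \<in> {pivot_index v | v. v \<in> row_module M \<and> v \<noteq> 0\<^sub>v (dim_col M)}"
    then obtain v where v: "v \<in> row_module M" "v \<noteq> 0\<^sub>v (dim_col M)" "x = pivot_index v" by auto
    then obtain i where i: "i < dim_row ?P" "lead_term (row ?P i) mod dim_col M = lead_term v mod dim_col M"
      using popov_lead_term_divisible[OF P(1), of v] P by metis
    have "pivot_index v = lead_term v mod dim_col M"
      using lead_term_pivot_entry(5)[of v] v(2) dim_vec_row_module[OF v(1)] by simp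
    then have "x = pivot_index (row ?P i)" using v(3) i(2) pivot_index_popov_row[OF P(1) i(1)] P by simp
    with i(1) show "x \<in> {pivot_index (row ?P i) | i. i < dim_row ?P}" by auto
  qed
  finally show ?thesis .
qed

section \<open>Selecting columns\<close>

definition vec_restrict :: "nat set \<Rightarrow> 'a vec \<Rightarrow> 'a vec" where
  "vec_restrict J v = vec (card J) (\<lambda>i. v $ pick J i)"

lemma dim_vec_restrict [simp]: "dim_vec (vec_restrict J v) = card J"
  unfolding vec_restrict_def by simp

lemma pick_less: "J \<subseteq> {0..<n} \<Longrightarrow> i < card J \<Longrightarrow> pick J i < n"
  using pick_in_set_le by fastforce

lemma pick_le_pick_iff:
  assumes "i < card J" "j < card J"
  shows "pick J i \<le> pick J j \<longleftrightarrow> i \<le> j"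
  using pick_mono_le[OF assms(1), of j] pick_mono_le[OF assms(2), of i] by (metis le_less not_less)

lemma pick_atLeastLessThan:
  assumes "i < r"
  shows "pick {0..<r} i = i"
proof -
  have "{a \<in> {0..<r}. a < i} = {0..<i}" using assms by auto
  then show ?thesis using pick_card_in_set[of i "{0..<r}"] assms by simp
qed

text \<open>Deleting entries outside \<open>J\<close> keeps the pivot when it lies in \<open>J\<close>: the comparison of terms
  \<open>d * n + j\<close> only depends on the order of the positions, which \<open>pick J\<close> preserves.\<close>

lemma pivot_index_vec_restrict:
  fixes v :: "'a::field poly vec"
  assumes J: "J \<subseteq> {0..<dim_vec v}" and v: "v \<noteq> 0\<^sub>v (dim_vec v)" and piv: "pivot_index v \<in> J"
  shows "vec_restrict J v \<noteq> 0\<^sub>v (card J)" "pick J (pivot_index (vec_restrict J v)) = pivot_index v"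
proof -
  let ?n = "dim_vec v" and ?m = "card J" and ?w = "vec_restrict J v"
  define i where "i = card {a \<in> J. a < pivot_index v}"
  define a where "a = lead_term v div ?n"
  note L = lead_term_pivot_entry[OF v]
  have i: "i < ?m" unfolding i_def using piv finite_subset[OF J] by (intro psubset_card_mono) auto
  have m: "?m > 0" using i by simp
  have pick_i: "pick J i = pivot_index v" unfolding i_def by (rule pick_card_in_set[OF piv])
  have lead_v: "lead_term v = a * ?n + pick J i" using L(5) pick_i a_def by simp
  have top: "term_coeff ?w (a * ?m + i) \<noteq> 0"
    using term_coeff_encode[of i ?w a] i pick_i L(3-5) term_coeff_lead_term[OF v]
    unfolding a_def vec_restrict_def by simp
  have above: "term_coeff ?w t = 0" if "a * ?m + i < t" for t
  proof -
    let ?k = "t mod ?m" and ?b = "t div ?m"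
    have k: "?k < ?m" using m by simp
    have coeff: "term_coeff ?w t = coeff (v $ pick J ?k) ?b"
      unfolding term_coeff_def vec_restrict_def using k by simp
    show ?thesis
    proof (cases "v $ pick J ?k = 0")
      case False
      have "degree (v $ pick J ?k) * ?n + pick J ?k \<le> a * ?n + pick J i"
        using entry_term_le_lead_term[OF pick_less[OF J k] False] lead_v by simp
      then have "degree (v $ pick J ?k) < a \<or> degree (v $ pick J ?k) = a \<and> ?k \<le> i"
        using mult_add_le_mult_add_iff[OF pick_less[OF J k] pick_less[OF J i]] pick_le_pick_iff[OF k i]
        by simp
      then have "degree (v $ pick J ?k) * ?m + ?k \<le> a * ?m + i"
        unfolding mult_add_le_mult_add_iff[OF k i] .
      then have "degree (v $ pick J ?k) * ?m < ?b * ?m" using that div_mult_mod_eq[of t ?m] by linarith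
      then have "degree (v $ pick J ?k) < ?b" using mult_less_cancel2 by blast
      then show ?thesis unfolding coeff by (simp add: coeff_eq_0)
    qed (simp add: coeff)
  qed
  have lead_w: "lead_term ?w = a * ?m + i" by (rule lead_term_eqI) (use top above m in auto)
  have "?w \<noteq> 0\<^sub>v (dim_vec ?w)" using vec_nonzero_if_term_coeff[OF top] m by simp
  then show "?w \<noteq> 0\<^sub>v ?m" "pick J (pivot_index ?w) = pivot_index v"
    using lead_term_pivot_entry(5)[of ?w] lead_w i pick_i by (simp_all add: mult_add_div_mod)
qed

lemma submatrix_cols:
  fixes A :: "'a mat"
  assumes J: "J \<subseteq> {0..<dim_col A}"
  shows "dim_row (submatrix A {0..<dim_row A} J) = dim_row A"
    "dim_col (submatrix A {0..<dim_row A} J) = card J"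
    "\<And>i j. i < dim_row A \<Longrightarrow> j < card J \<Longrightarrow> submatrix A {0..<dim_row A} J $$ (i, j) = A $$ (i, pick J j)"
proof -
  have rows: "{i. i < dim_row A \<and> i \<in> {0..<dim_row A}} = {0..<dim_row A}" by auto
  have cols: "{j. j < dim_col A \<and> j \<in> J} = J" using J by auto
  show "dim_row (submatrix A {0..<dim_row A} J) = dim_row A"
    "dim_col (submatrix A {0..<dim_row A} J) = card J"
    unfolding dim_submatrix rows cols by simp_all
  show "submatrix A {0..<dim_row A} J $$ (i, j) = A $$ (i, pick J j)" if "i < dim_row A" "j < card J" for i j
    using submatrix_index[of i A "{0..<dim_row A}" j J] pick_atLeastLessThan that rows cols by simp
qed

lemma row_module_submatrix_cols:
  fixes A :: "'a::comm_ring_1 mat"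
  assumes J: "J \<subseteq> {0..<dim_col A}"
  shows "row_module (submatrix A {0..<dim_row A} J) = vec_restrict J ` row_module A"
proof -
  let ?B = "submatrix A {0..<dim_row A} J"
  note B = submatrix_cols[OF J]
  have "vec (dim_col ?B) (\<lambda>j. \<Sum>i<dim_row ?B. c i * ?B $$ (i, j)) =
    vec_restrict J (vec (dim_col A) (\<lambda>j. \<Sum>i<dim_row A. c i * A $$ (i, j)))" for c
    using B pick_less[OF J] unfolding vec_restrict_def by (intro eq_vecI) auto
  then show ?thesis unfolding row_module_def by auto
qed

lemma pick_pivot_index_vec_restrict:
  fixes A :: "'a::field poly mat"
  assumes J: "J \<subseteq> {0..<dim_col A}" and v: "v \<in> row_module A" "v \<noteq> 0\<^sub>v (dim_col A)"
    and piv: "pivot_index v \<in> J"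
  shows "vec_restrict J v \<noteq> 0\<^sub>v (card J)" "pick J (pivot_index (vec_restrict J v)) = pivot_index v"
  using pivot_index_vec_restrict[of J v] J v piv dim_vec_row_module[OF v(1)] by simp_all

section \<open>The pivot support of a column submatrix\<close>

lemma pivot_support_inter_subset_submatrix:
  fixes A :: "'a::field poly mat"
  assumes J: "J \<subseteq> {0..<dim_col A}"
  shows "set (pivot_support A) \<inter> J \<subseteq> pick J ` set (pivot_support (submatrix A {0..<dim_row A} J))"
proof
  fix x assume "x \<in> set (pivot_support A) \<inter> J"
  then obtain v where v: "v \<in> row_module A" "v \<noteq> 0\<^sub>v (dim_col A)" "x = pivot_index v" "x \<in> J"
    unfolding set_pivot_support by blast
  then have "vec_restrict J v \<in> row_module (submatrix A {0..<dim_row A} J)"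
    using row_module_submatrix_cols[OF J] by blast
  with pick_pivot_index_vec_restrict[OF J v(1,2)] v
  show "x \<in> pick J ` set (pivot_support (submatrix A {0..<dim_row A} J))"
    unfolding set_pivot_support submatrix_cols(2)[OF J] by force
qed

lemma pivot_support_submatrix_subset:
  fixes A :: "'a::field poly mat"
  assumes J: "J \<subseteq> {0..<dim_col A}" and pivots: "set (pivot_support A) \<subseteq> J"
  shows "pick J ` set (pivot_support (submatrix A {0..<dim_row A} J)) \<subseteq> set (pivot_support A)"
proof
  fix y assume "y \<in> pick J ` set (pivot_support (submatrix A {0..<dim_row A} J))"
  then obtain v where v: "v \<in> row_module A" "vec_restrict J v \<noteq> 0\<^sub>v (card J)"
    and y: "y = pick J (pivot_index (vec_restrict J v))"
    unfolding set_pivot_support row_module_submatrix_cols[OF J] submatrix_cols(2)[OF J] by blast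
  have nz: "v \<noteq> 0\<^sub>v (dim_col A)"
  proof
    assume "v = 0\<^sub>v (dim_col A)"
    then have "vec_restrict J v = 0\<^sub>v (card J)"
      using pick_less[OF J] unfolding vec_restrict_def by (intro eq_vecI) auto
    with v(2) show False by simp
  qed
  then have "pivot_index v \<in> set (pivot_support A)" using v(1) unfolding set_pivot_support by blast
  then show "y \<in> set (pivot_support A)" using pick_pivot_index_vec_restrict[OF J v(1) nz] pivots y by auto
qed

theorem lemma4p4:
  fixes A :: "'a::field poly mat" and J :: "nat set"
  assumes "J \<subseteq> {0..<dim_col A}"
  shows "set (pivot_support A) \<inter> J \<subseteq>
           set (map (pick J) (pivot_support (submatrix A {0..<dim_row A} J))) \<and>
         (set (pivot_support A) \<subseteq> J \<longrightarrow>
           set (pivot_support A) = set (map (pick J) (pivot_support (submatrix A {0..<dim_row A} J))))"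
  using pivot_support_inter_subset_submatrix[OF assms] pivot_support_submatrix_subset[OF assms]
  by auto

end
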